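(* Let $D,\chi,\varepsilon>0$, $a\ge0$, $\beta\ge 0$, $b=D\beta^2$, and let $0<r_0<r_1$. Suppose $\rho\in C^0[0,\infty)$, $\phi\in C^2[0,\infty)$ satisfy $\rho(0)=0$, $\phi(0)\ge 0$, $\rho>0$ on $(r_0,r_1)$, $\rho\equiv0$ on $[0,r_0]\cup[r_1,\infty)$, $D\phi_{rr}+D\frac{\phi_r}{r}+a\rho-b\phi=0$ on $(0,\infty)$, and on $(r_0,r_1)$ the relation $\varepsilon\rho=\chi\phi+K$ holds for a constant $K$. If $K=0$ and $\phi_r(r_0)=\phi_r(r_1)=0$, then no such solution exists (i.e. there is no nontrivial solution of this form).
   Context: The relation $\varepsilon\rho=\chi\phi+K$ on the positivity region is the integrated form of the equation $\partial_r(\frac{\varepsilon}{2}\rho^2)=\chi\rho\phi_r$ from the radially symmetric stationary form of a hyperbolic-parabolic chemotaxis model on $\mathbb{R}^2$ with pressure $p(\rho)=\frac{\varepsilon}{2}\rho^2$. *)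

theory Defs
  imports "HOL-Analysis.Analysis"
begin

end

theory Submission
  imports Defs
begin

text \<open>With \<open>K = 0\<close> the relation \<open>\<epsilon>\<rho> = \<chi>\<phi>\<close> turns the radial equation on \<open>(r\<^sub>0, r\<^sub>1)\<close> into
  \<open>(r\<phi>')' = k r \<phi>\<close> with the constant \<open>k = (b\<epsilon> - a\<chi>)/(\<epsilon>D)\<close>, and \<open>\<phi> > 0\<close> there.
  Since \<open>r\<phi>'\<close> vanishes at both ends, Rolle's theorem forces \<open>k = 0\<close>; then \<open>r\<phi>'\<close> is
  constant, hence zero, so \<open>\<phi>\<close> is constant on \<open>[r\<^sub>0, r\<^sub>1]\<close>. But \<open>\<phi>(r\<^sub>0) = 0\<close> by continuity,
  because \<open>\<rho>(r\<^sub>0) = 0\<close>, contradicting \<open>\<phi> > 0\<close> inside.\<close>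

lemma has_real_derivative_at_if_within_atLeast:
  assumes "(f has_real_derivative f') (at x within {c..})" and "c < x"
  shows "(f has_real_derivative f') (at x)"
proof -
  have "at x within {c..} = at x"
    using \<open>c < x\<close> by (intro at_within_interior) simp
  with assms(1) show ?thesis by simp
qed

lemma continuous_on_eq_at_left_endpoint:
  fixes f g :: "real \<Rightarrow> 'a::t2_space"
  assumes "a < b" and "continuous_on {a..b} f" and "continuous_on {a..b} g"
    and "\<And>x. a < x \<Longrightarrow> x < b \<Longrightarrow> f x = g x"
  shows "f a = g a"
proof -
  have "(f \<longlongrightarrow> f a) (at_right a)" "(g \<longlongrightarrow> g a) (at_right a)"
    using assms(1-3) by (auto simp: continuous_on_def at_within_Icc_at_right dest!: bspec[of _ _ a])
  moreover have "\<forall>\<^sub>F x in at_right a. f x = g x"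
    using eventually_at_right_real[OF \<open>a < b\<close>] by eventually_elim (use assms(4) in auto)
  ultimately show ?thesis
    by (metis tendsto_cong trivial_limit_at_right_real tendsto_unique)
qed

lemma radial_ode_divergence_form:
  fixes r D a b eps chi \<rho> \<phi> \<phi>' \<phi>'' :: real
  assumes "r \<noteq> 0" "D \<noteq> 0" "eps \<noteq> 0"
    and "D * \<phi>'' + D * \<phi>' / r + a * \<rho> - b * \<phi> = 0" and "eps * \<rho> = chi * \<phi>"
  shows "\<phi>' + r * \<phi>'' = (b * eps - a * chi) / (eps * D) * (r * \<phi>)"
proof -
  have "r * (D * \<phi>'' + D * \<phi>' / r + a * \<rho> - b * \<phi>) = 0" using assms(4) by simp
  then have "D * (\<phi>' + r * \<phi>'') = r * (b * \<phi> - a * \<rho>)"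
    using assms(1) by (simp add: algebra_simps)
  then have "eps * D * (\<phi>' + r * \<phi>'') = eps * (r * (b * \<phi> - a * \<rho>))"
    by simp
  also have "\<dots> = r * (b * eps * \<phi> - a * (eps * \<rho>))"
    by (simp add: algebra_simps)
  also have "\<dots> = (b * eps - a * chi) * (r * \<phi>)"
    using assms(5) by (simp add: algebra_simps)
  finally show ?thesis using assms(2,3) by (simp add: field_simps)
qed

lemma radial_no_positive_solution_Neumann:
  fixes \<phi> \<phi>' \<phi>'' :: "real \<Rightarrow> real" and a b k :: real
  assumes "0 \<le> a" "a < b"
    and \<phi>_deriv: "\<And>r. a \<le> r \<Longrightarrow> r \<le> b \<Longrightarrow> (\<phi> has_real_derivative \<phi>' r) (at r)"
    and \<phi>'_deriv: "\<And>r. a \<le> r \<Longrightarrow> r \<le> b \<Longrightarrow> (\<phi>' has_real_derivative \<phi>'' r) (at r)"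
    and ode: "\<And>r. a < r \<Longrightarrow> r < b \<Longrightarrow> \<phi>' r + r * \<phi>'' r = k * (r * \<phi> r)"
    and \<phi>_pos: "\<And>r. a < r \<Longrightarrow> r < b \<Longrightarrow> \<phi> r > 0"
    and "\<phi> a = 0" "\<phi>' a = 0" "\<phi>' b = 0"
  shows False
proof -
  define w where "w r = r * \<phi>' r" for r
  have w_deriv: "(w has_real_derivative \<phi>' r + r * \<phi>'' r) (at r)" if "a \<le> r" "r \<le> b" for r
    unfolding w_def using \<phi>'_deriv[OF that] by (auto intro!: derivative_eq_intros)
  obtain z where z: "a < z" "z < b" "w b - w a = (b - a) * (\<phi>' z + z * \<phi>'' z)"
    using MVT2[OF \<open>a < b\<close> w_deriv] by blast
  have "k * (z * \<phi> z) = 0"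
    using z ode[OF z(1,2)] \<open>\<phi>' a = 0\<close> \<open>\<phi>' b = 0\<close> by (simp add: w_def)
  then have "k = 0" using \<phi>_pos[OF z(1,2)] z(1) \<open>0 \<le> a\<close> by simp
  have w_const: "w r = w a" if "a \<le> r" "r \<le> b" for r
  proof (rule DERIV_isconst2[OF \<open>a < b\<close> _ _ that])
    show "continuous_on {a..b} w"
      by (rule DERIV_continuous_on, rule has_field_derivative_at_within, rule w_deriv) auto
    show "(w has_real_derivative 0) (at r)" if "a < r" "r < b" for r
      using w_deriv[of r] ode[OF that] \<open>k = 0\<close> that by simp
  qed
  define m where "m = (a + b) / 2"
  have m: "a < m" "m < b" using \<open>a < b\<close> by (auto simp: m_def)
  have "\<phi> m = \<phi> a"
  proof (rule DERIV_isconst2[OF \<open>a < b\<close> _ _ less_imp_le[OF m(1)] less_imp_le[OF m(2)]])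
    show "continuous_on {a..b} \<phi>"
      by (rule DERIV_continuous_on, rule has_field_derivative_at_within, rule \<phi>_deriv) auto
    show "(\<phi> has_real_derivative 0) (at r)" if "a < r" "r < b" for r
      using \<phi>_deriv[of r] w_const[of r] that \<open>0 \<le> a\<close> \<open>\<phi>' a = 0\<close> by (simp add: w_def)
  qed
  then show False using \<phi>_pos[OF m] \<open>\<phi> a = 0\<close> by simp
qed

theorem proposition7p1:
  fixes D chi eps a \<beta> b r0 r1 K :: real
    and \<rho> \<phi> \<phi>' \<phi>'' :: "real \<Rightarrow> real"
  assumes D_pos: "D > 0" and chi_pos: "chi > 0" and eps_pos: "eps > 0"
    and a_nonneg: "a \<ge> 0" and beta_nonneg: "\<beta> \<ge> 0" and b_def: "b = D * \<beta>\<^sup>2"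
    and r0_pos: "0 < r0" and r01: "r0 < r1"
    and rho_cont: "continuous_on {0..} \<rho>"
    and phi_d1: "\<And>r. r \<ge> 0 \<Longrightarrow> (\<phi> has_real_derivative \<phi>' r) (at r within {0..})"
    and phi_d2: "\<And>r. r \<ge> 0 \<Longrightarrow> (\<phi>' has_real_derivative \<phi>'' r) (at r within {0..})"
    and phi''_cont: "continuous_on {0..} \<phi>''"
    and rho0: "\<rho> 0 = 0" and phi0: "\<phi> 0 \<ge> 0"
    and rho_pos: "\<And>r. r0 < r \<Longrightarrow> r < r1 \<Longrightarrow> \<rho> r > 0"
    and rho_zero: "\<And>r. (0 \<le> r \<and> r \<le> r0) \<or> r1 \<le> r \<Longrightarrow> \<rho> r = 0"
    and ode: "\<And>r. r > 0 \<Longrightarrow> D * \<phi>'' r + D * \<phi>' r / r + a * \<rho> r - b * \<phi> r = 0"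
    and rel: "\<And>r. r0 < r \<Longrightarrow> r < r1 \<Longrightarrow> eps * \<rho> r = chi * \<phi> r + K"
    and K0: "K = 0"
    and bc0: "\<phi>' r0 = 0" and bc1: "\<phi>' r1 = 0"
  shows False
proof (rule radial_no_positive_solution_Neumann[of r0 r1 \<phi> \<phi>' \<phi>''])
  show "0 \<le> r0" "r0 < r1" "\<phi>' r0 = 0" "\<phi>' r1 = 0" using r0_pos r01 bc0 bc1 by auto
  show "(\<phi> has_real_derivative \<phi>' r) (at r)" if "r0 \<le> r" "r \<le> r1" for r
    using that r0_pos by (intro has_real_derivative_at_if_within_atLeast[OF phi_d1]) auto
  show "(\<phi>' has_real_derivative \<phi>'' r) (at r)" if "r0 \<le> r" "r \<le> r1" for r
    using that r0_pos by (intro has_real_derivative_at_if_within_atLeast[OF phi_d2]) auto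
  have "continuous_on {0..} \<phi>"
    using phi_d1 by (rule DERIV_continuous_on) simp
  then have "continuous_on {r0..r1} (\<lambda>r. chi * \<phi> r)" "continuous_on {r0..r1} (\<lambda>r. eps * \<rho> r)"
    using r0_pos rho_cont by (auto intro!: continuous_on_mult_left elim!: continuous_on_subset)
  then have "eps * \<rho> r0 = chi * \<phi> r0"
    using r01 rel K0 by (auto intro: continuous_on_eq_at_left_endpoint[of r0 r1 "\<lambda>r. eps * \<rho> r"])
  then show "\<phi> r0 = 0" using rho_zero[of r0] r0_pos chi_pos by simp
  show "\<phi> r > 0" if "r0 < r" "r < r1" for r
  proof -
    have "0 < chi * \<phi> r"
      using rel[OF that] K0 rho_pos[OF that] eps_pos by (metis add_0_right mult_pos_pos)
    then show ?thesis using chi_pos by (simp add: zero_less_mult_iff)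
  qed
  show "\<phi>' r + r * \<phi>'' r = (b * eps - a * chi) / (eps * D) * (r * \<phi> r)"
    if "r0 < r" "r < r1" for r
    using that r0_pos D_pos eps_pos ode[of r] rel[OF that] K0
    by (intro radial_ode_divergence_form) auto
qed

end
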